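(* Let $N\geq1$, $q=2^N$, let $\pi$ be a permutation of $q$ symbols and let $(I,F_\pi)$ be the rotated odometer $F_\pi=\mathfrak{a}\circ R_\pi$ on $I=[0,1)$. Let $I_{per}$ be the set of periodic points of $F_\pi$ and $I_{np}=I\setminus I_{per}$. Then: (i) every point of $I_{per}$ is periodic, and the restriction $F_\pi:I_{per}\to I_{per}$ is well-defined and invertible; (ii) if $I_{per}$ is non-empty, then $I_{per}$ is a finite union of half-open maximal periodic intervals $[x,y)$, $x,y\in I$; thus the set of periods of points of $(I,F_\pi)$ is finite; (iii) $0\in I_{np}$, and $F_\pi:I_{np}\to I_{np}$ is well-defined and invertible at every point of $I_{np}\setminus\{0\}$; (iv) the system $(I_{np},F_\pi)$ is minimal.
   Context: The von Neumann–Kakutani map $\mathfrak{a}:[0,1)\to[0,1)$ is $\mathfrak{a}(x)=x-(1-3\cdot 2^{-n})$ if $x\in[1-2^{1-n},1-2^{-n})$, $n\geq1$. For $q\in\mathbb{N}$ divide $I=[0,1)$ into the $q$ intervals $[k/q,(k+1)/q)$, $0\le k<q$; for a permutation $\pi$ of $q$ symbols, $R_\pi:I\to I$ is the interval exchange translating $[k/q,(k+1)/q)$ onto $[\pi(k)/q,(\pi(k)+1)/q)$. The rotated odometer is $F_\pi=\mathfrak{a}\circ R_\pi$. *)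

theory Defs
  imports "HOL-Analysis.Analysis" "HOL-Combinatorics.Permutations"
begin

definition unitI :: "real set" where
  "unitI = {0..<1}"

text \<open>The von Neumann--Kakutani map: on [1 - 2^(1-n), 1 - 2^(-n)), n >= 1,
  it is x - (1 - 3 * 2^(-n)).  Outside [0,1) it is (irrelevantly) the identity.\<close>
definition vnk_piece :: "nat \<Rightarrow> real \<Rightarrow> bool" where
  "vnk_piece n x \<longleftrightarrow> n \<ge> 1 \<and> 1 - 2 / 2 ^ n \<le> x \<and> x < 1 - 1 / 2 ^ n"

definition vnk :: "real \<Rightarrow> real" where
  "vnk x = (if \<exists>n. vnk_piece n x
            then x - (1 - 3 / 2 ^ (THE n. vnk_piece n x))
            else x)"

text \<open>The interval exchange R_pi: translates [k/q,(k+1)/q) onto [pi k/q,(pi k+1)/q).\<close>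
definition Rexch :: "nat \<Rightarrow> (nat \<Rightarrow> nat) \<Rightarrow> real \<Rightarrow> real" where
  "Rexch q \<pi> x = (if x \<in> unitI
      then x + (real (\<pi> (nat \<lfloor>real q * x\<rfloor>)) - real (nat \<lfloor>real q * x\<rfloor>)) / real q
      else x)"

definition Frot :: "nat \<Rightarrow> (nat \<Rightarrow> nat) \<Rightarrow> real \<Rightarrow> real" where
  "Frot q \<pi> = vnk \<circ> Rexch q \<pi>"

definition periodic_pt :: "(real \<Rightarrow> real) \<Rightarrow> real \<Rightarrow> bool" where
  "periodic_pt F x \<longleftrightarrow> (\<exists>n>0. (F ^^ n) x = x)"

definition min_period :: "(real \<Rightarrow> real) \<Rightarrow> real \<Rightarrow> nat" where
  "min_period F x = (LEAST n. n > 0 \<and> (F ^^ n) x = x)"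

definition Iper :: "(real \<Rightarrow> real) \<Rightarrow> real set" where
  "Iper F = {x \<in> unitI. periodic_pt F x}"

definition Inp :: "(real \<Rightarrow> real) \<Rightarrow> real set" where
  "Inp F = unitI - Iper F"

definition periodic_interval :: "(real \<Rightarrow> real) \<Rightarrow> real \<Rightarrow> real \<Rightarrow> bool" where
  "periodic_interval F x y \<longleftrightarrow> x < y \<and> {x..<y} \<subseteq> Iper F \<and>
     (\<forall>u\<in>{x..<y}. \<forall>v\<in>{x..<y}. min_period F u = min_period F v)"

definition max_periodic_interval :: "(real \<Rightarrow> real) \<Rightarrow> real \<Rightarrow> real \<Rightarrow> bool" where
  "max_periodic_interval F x y \<longleftrightarrow> periodic_interval F x y \<and>
     (\<forall>x' y'. periodic_interval F x' y' \<and> {x..<y} \<subseteq> {x'..<y'} \<longrightarrow> {x'..<y'} = {x..<y})"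

definition minimal_on :: "real set \<Rightarrow> (real \<Rightarrow> real) \<Rightarrow> bool" where
  "minimal_on S F \<longleftrightarrow> F ` S \<subseteq> S \<and> (\<forall>x\<in>S. S \<subseteq> closure (range (\<lambda>n. (F ^^ n) x)))"

end

theory Submission
  imports Defs
begin

text \<open>
  For \<open>m \<ge> N\<close> split \<open>[0,1)\<close> into the \<open>2^m\<close> dyadic cells of level \<open>m\<close>. The exchange \<open>R\<^sub>\<pi>\<close>
  permutes these cells by translations, and the von Neumann--Kakutani map translates every
  cell onto another one, except the last cell, which it maps into the first one. So \<open>F\<^sub>\<pi>\<close>
  induces a permutation \<open>\<sigma>\<^sub>m = cell_map m\<close> of the level-\<open>m\<close> cells, and it translates each cell onto its
  image unless \<open>R\<^sub>\<pi>\<close> sends that cell to the last one (the cell "wraps").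

  Going from level \<open>m\<close> to \<open>m + 1\<close>, the \<open>\<sigma>\<close>-cycle of the first cell doubles: it is run through
  once along the left halves of its cells and, after the wrapping cell, once along the right
  halves. Hence at level \<open>m\<close> the cycle of the first cell (\<open>zero_orbit m\<close>) contains every cell whose level-\<open>N\<close>
  ancestor lies on the level-\<open>N\<close> cycle of the first cell, and it has at least \<open>2^(m-N)\<close>
  elements. Points in these cells are not periodic, and their orbits visit every such cell
  at every level, which gives minimality. Every other level-\<open>N\<close> cell never wraps, so \<open>F\<^sub>\<pi>\<close>
  merely translates it along its \<open>\<sigma>\<^sub>N\<close>-cycle: it consists of periodic points with a common
  minimal period, and maximal periodic intervals have dyadic endpoints of level \<open>N\<close>.
\<close>

section \<open>Dyadic cells\<close>

definition dyadic_cell :: "nat \<Rightarrow> nat \<Rightarrow> real set" where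
  "dyadic_cell m k = {real k / 2 ^ m..<(real k + 1) / 2 ^ m}"

definition dyadic_index :: "nat \<Rightarrow> real \<Rightarrow> nat" where
  "dyadic_index m x = nat \<lfloor>2 ^ m * x\<rfloor>"

lemma mem_dyadic_cell_iff: "x \<in> dyadic_cell m k \<longleftrightarrow> real k \<le> 2 ^ m * x \<and> 2 ^ m * x < real k + 1"
  unfolding dyadic_cell_def by (simp add: field_simps)

lemma dyadic_cell_nonneg: "x \<in> dyadic_cell m k \<Longrightarrow> 0 \<le> x"
proof -
  assume "x \<in> dyadic_cell m k"
  then have "real k / 2 ^ m \<le> x" unfolding dyadic_cell_def by simp
  moreover have "0 \<le> real k / 2 ^ m" by simp
  ultimately show ?thesis by linarith
qed

lemma left_mem_dyadic_cell: "real k / 2 ^ m \<in> dyadic_cell m k"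
  unfolding dyadic_cell_def by (simp add: divide_strict_right_mono)

lemma mem_dyadic_cell_index: "0 \<le> x \<Longrightarrow> x \<in> dyadic_cell m (dyadic_index m x)"
proof -
  assume "0 \<le> x"
  then have "real (nat \<lfloor>2 ^ m * x\<rfloor>) = of_int \<lfloor>2 ^ m * x\<rfloor>" by simp
  then show ?thesis unfolding mem_dyadic_cell_iff dyadic_index_def
    using of_int_floor_le[of "2 ^ m * x"] real_of_int_floor_add_one_gt[of "2 ^ m * x"] by linarith
qed

lemma dyadic_index_eq: "x \<in> dyadic_cell m k \<Longrightarrow> dyadic_index m x = k"
proof -
  assume "x \<in> dyadic_cell m k"
  then have "\<lfloor>2 ^ m * x\<rfloor> = int k" unfolding mem_dyadic_cell_iff by (simp add: floor_eq_iff)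
  then show ?thesis unfolding dyadic_index_def by simp
qed

lemma dyadic_cell_less_one_iff:
  assumes "x \<in> dyadic_cell m k"
  shows "x < 1 \<longleftrightarrow> k < 2 ^ m"
proof
  assume "x < 1"
  then have "2 ^ m * x < 2 ^ m" by simp
  then have "real k < 2 ^ m" using assms unfolding mem_dyadic_cell_iff by linarith
  then show "k < 2 ^ m" by simp
next
  assume "k < 2 ^ m"
  then have "real (k + 1) \<le> 2 ^ m" by (simp only: of_nat_le_numeral_power_cancel_iff)
  then have "real k + 1 \<le> 2 ^ m" by simp
  then have "2 ^ m * x < 2 ^ m" using assms unfolding mem_dyadic_cell_iff by linarith
  then show "x < 1" by simp
qed

lemma dyadic_index_less: "0 \<le> x \<Longrightarrow> x < 1 \<Longrightarrow> dyadic_index m x < 2 ^ m"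
  using mem_dyadic_cell_index dyadic_cell_less_one_iff by blast

lemma dyadic_cell_subset_unit: "k < 2 ^ m \<Longrightarrow> dyadic_cell m k \<subseteq> {0..<1}"
  using dyadic_cell_nonneg dyadic_cell_less_one_iff by fastforce

lemma dyadic_grid_le_iff: "x \<in> dyadic_cell m k \<Longrightarrow> real_of_int i / 2 ^ m \<le> x \<longleftrightarrow> i \<le> int k"
proof -
  assume "x \<in> dyadic_cell m k"
  then have "\<lfloor>2 ^ m * x\<rfloor> = int k"
    unfolding mem_dyadic_cell_iff by (simp add: floor_eq_iff)
  moreover have "real_of_int i / 2 ^ m \<le> x \<longleftrightarrow> real_of_int i \<le> 2 ^ m * x"
    by (simp add: field_simps)
  ultimately show ?thesis by (simp add: le_floor_iff[symmetric])
qed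

lemma dyadic_grid_less_iff: "x \<in> dyadic_cell m k \<Longrightarrow> x < real_of_int i / 2 ^ m \<longleftrightarrow> int k < i"
  using dyadic_grid_le_iff[of x m k i] by linarith

lemma dyadic_cell_translate:
  "x \<in> dyadic_cell m k \<Longrightarrow> x + (real j - real k) / 2 ^ m \<in> dyadic_cell m j"
  unfolding mem_dyadic_cell_iff by (simp add: distrib_left)

lemma dyadic_cell_parent:
  assumes "x \<in> dyadic_cell m k" "n \<le> m"
  shows "x \<in> dyadic_cell n (k div 2 ^ (m - n))"
proof -
  define d :: nat where "d = 2 ^ (m - n)"
  have "d > 0" unfolding d_def by simp
  have "(2::real) ^ m = 2 ^ n * 2 ^ (m - n)" using assms(2) by (simp flip: power_add)
  then have x: "real k \<le> (2 ^ n * x) * real d" "(2 ^ n * x) * real d < real k + 1"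
    using assms(1) unfolding mem_dyadic_cell_iff d_def by (simp_all add: mult_ac)
  have "k div d * d \<le> k" "k + 1 \<le> (k div d + 1) * d"
    using dividend_less_div_times[OF \<open>d > 0\<close>, of k] by simp_all
  then have "real (k div d * d) \<le> real k" "real (k + 1) \<le> real ((k div d + 1) * d)"
    by (simp_all only: of_nat_le_iff)
  then have "real (k div d) * real d \<le> real k" "real k + 1 \<le> (real (k div d) + 1) * real d"
    by (simp_all add: algebra_simps)
  then have "real (k div d) * real d \<le> (2 ^ n * x) * real d"
    "(2 ^ n * x) * real d < (real (k div d) + 1) * real d"
    using x by linarith+
  then show ?thesis unfolding mem_dyadic_cell_iff d_def[symmetric] using \<open>d > 0\<close> by simp
qed

lemma dyadic_cell_meets_interval:
  assumes "x \<in> dyadic_cell m a" "a \<le> c" "real c / 2 ^ m < y" "x < y"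
  shows "max x (real c / 2 ^ m) \<in> {x..<y} \<inter> dyadic_cell m c"
proof -
  have "x < (real a + 1) / 2 ^ m" using assms(1) unfolding dyadic_cell_def by simp
  also have "\<dots> \<le> (real c + 1) / 2 ^ m" using assms(2) by (simp add: divide_right_mono)
  finally show ?thesis using assms(3,4) left_mem_dyadic_cell[of c m] unfolding dyadic_cell_def by auto
qed

lemma dist_dyadic_cell: "x \<in> dyadic_cell m k \<Longrightarrow> y \<in> dyadic_cell m k \<Longrightarrow> dist x y < 1 / 2 ^ m"
  unfolding dyadic_cell_def dist_real_def by (simp add: abs_less_iff field_simps)

section \<open>The von Neumann--Kakutani map\<close>

lemma two_div_power_le: "n < n' \<Longrightarrow> (2::real) / 2 ^ n' \<le> 1 / 2 ^ n"
proof -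
  assume "n < n'"
  then have "(2::real) ^ Suc n \<le> 2 ^ n'" by (intro power_increasing) auto
  then show ?thesis by (simp add: field_simps)
qed

lemma vnk_piece_unique:
  assumes "vnk_piece n x" "vnk_piece n' x"
  shows "n = n'"
proof (cases n n' rule: linorder_cases)
  case less
  then show ?thesis using assms two_div_power_le[OF less] unfolding vnk_piece_def by linarith
next
  case greater
  then show ?thesis using assms two_div_power_le[OF greater] unfolding vnk_piece_def by linarith
qed

lemma vnk_piece_eq: "vnk_piece n x \<Longrightarrow> vnk x = x - 1 + 3 / 2 ^ n"
proof -
  assume n: "vnk_piece n x"
  then have "(THE n. vnk_piece n x) = n" using vnk_piece_unique by blast
  then show ?thesis using n unfolding vnk_def by auto
qed

lemma vnk_piece_image: "vnk_piece n x \<Longrightarrow> 1 / 2 ^ n \<le> vnk x \<and> vnk x < 2 / 2 ^ n"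
  using vnk_piece_eq[of n x] unfolding vnk_piece_def by auto

lemma vnk_piece_exists:
  assumes "x \<in> {0..<1}"
  obtains n where "vnk_piece n x"
proof -
  define P where "P n \<longleftrightarrow> x < 1 - 1 / (2::real) ^ n" for n
  obtain n0 where "(1 / 2::real) ^ n0 < 1 - x"
    using real_arch_pow_inv[of "1 - x" "1 / 2"] assms by auto
  then have "P n0" unfolding P_def by (simp add: power_divide)
  define n where "n = (LEAST n. P n)"
  have "P n" unfolding n_def using \<open>P n0\<close> by (rule LeastI)
  have "n \<ge> 1" using \<open>P n\<close> assms unfolding P_def by (cases n) auto
  have "\<not> P (n - 1)" unfolding n_def by (rule not_less_Least) (use \<open>n \<ge> 1\<close> n_def in simp)
  moreover have "(1::real) / 2 ^ (n - 1) = 2 / 2 ^ n" using \<open>n \<ge> 1\<close> by (cases n) auto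
  ultimately have "vnk_piece n x" using \<open>P n\<close> \<open>n \<ge> 1\<close> unfolding vnk_piece_def P_def by auto
  then show thesis by (rule that)
qed

lemma vnk_in_unit: "x \<in> {0..<1} \<Longrightarrow> vnk x \<in> {0<..<1}"
proof -
  assume "x \<in> {0..<1}"
  then obtain n where n: "vnk_piece n x" by (rule vnk_piece_exists)
  then have "(2::real) ^ 1 \<le> 2 ^ n" unfolding vnk_piece_def by (intro power_increasing) auto
  then have "(2::real) / 2 ^ n \<le> 1" by simp
  moreover have "(0::real) < 1 / 2 ^ n" by simp
  ultimately have "0 < vnk x" "vnk x < 1" using vnk_piece_image[OF n] by linarith+
  then show ?thesis by simp
qed

lemma vnk_image: "vnk ` {0..<1} = {0<..<1}"
proof
  show "vnk ` {0..<1} \<subseteq> {0<..<1}" using vnk_in_unit by blast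
next
  show "{0<..<1} \<subseteq> vnk ` {0..<1}"
  proof
    fix y :: real assume y: "y \<in> {0<..<1}"
    define P where "P n \<longleftrightarrow> 1 / (2::real) ^ n \<le> y" for n
    obtain n0 where "(1 / 2::real) ^ n0 < y" using real_arch_pow_inv[of y "1 / 2"] y by auto
    then have "P n0" unfolding P_def by (simp add: power_divide)
    define n where "n = (LEAST n. P n)"
    have "P n" unfolding n_def using \<open>P n0\<close> by (rule LeastI)
    have "n \<ge> 1" using \<open>P n\<close> y unfolding P_def by (cases n) auto
    have "\<not> P (n - 1)" unfolding n_def by (rule not_less_Least) (use \<open>n \<ge> 1\<close> n_def in simp)
    moreover have "(1::real) / 2 ^ (n - 1) = 2 / 2 ^ n" using \<open>n \<ge> 1\<close> by (cases n) auto
    ultimately have "y < 2 / 2 ^ n" unfolding P_def by simp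
    define x where "x = y + 1 - 3 / 2 ^ n"
    have x: "vnk_piece n x" unfolding vnk_piece_def x_def using \<open>n \<ge> 1\<close> \<open>P n\<close> \<open>y < 2 / 2 ^ n\<close>
      unfolding P_def by auto
    have "(2::real) ^ 1 \<le> 2 ^ n" using \<open>n \<ge> 1\<close> by (intro power_increasing) auto
    then have "(2::real) / 2 ^ n \<le> 1" by simp
    moreover have "(0::real) < 1 / 2 ^ n" by simp
    ultimately have "0 \<le> x" "x < 1" using x unfolding vnk_piece_def by linarith+
    then have "x \<in> {0..<1}" by simp
    moreover have "vnk x = y" using vnk_piece_eq[OF x] unfolding x_def by simp
    ultimately show "y \<in> vnk ` {0..<1}" by blast
  qed
qed

lemma inj_on_vnk: "inj_on vnk {0..<1}"
proof (rule inj_onI)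
  fix x y assume x: "x \<in> {0..<(1::real)}" and y: "y \<in> {0..<(1::real)}" and eq: "vnk x = vnk y"
  obtain n where n: "vnk_piece n x" using x by (rule vnk_piece_exists)
  obtain n' where n': "vnk_piece n' y" using y by (rule vnk_piece_exists)
  have "n = n'"
  proof (cases n n' rule: linorder_cases)
    case less
    then show ?thesis using two_div_power_le[OF less] vnk_piece_image[OF n] vnk_piece_image[OF n'] eq
      by linarith
  next
    case greater
    then show ?thesis using two_div_power_le[OF greater] vnk_piece_image[OF n] vnk_piece_image[OF n'] eq
      by linarith
  qed
  then have "vnk_piece n y" using n' by simp
  then show "x = y" using vnk_piece_eq[OF n] vnk_piece_eq[of n y] eq by linarith
qed

lemma vnk_piece_level:
  assumes "vnk_piece n x" "x \<in> dyadic_cell m k" "k + 1 < 2 ^ m"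
  shows "n \<le> m"
proof (rule ccontr)
  assume "\<not> n \<le> m"
  then have "1 - 1 / 2 ^ m \<le> x" using assms(1) two_div_power_le[of m n] unfolding vnk_piece_def by linarith
  moreover have "1 - 1 / (2::real) ^ m = real_of_int (2 ^ m - 1) / 2 ^ m" by (simp add: field_simps)
  ultimately have "real_of_int (2 ^ m - 1) / 2 ^ m \<le> x" by (simp only:)
  then have "2 ^ m - 1 \<le> int k" by (rule dyadic_grid_le_iff[OF assms(2), THEN iffD1])
  moreover have "int (k + 1) < int (2 ^ m)" using assms(3) by (simp only: of_nat_less_iff)
  ultimately show False by simp
qed

lemma vnk_piece_dyadic_cell_iff:
  assumes "n \<le> m" "x \<in> dyadic_cell m k" "y \<in> dyadic_cell m k"
  shows "vnk_piece n x \<longleftrightarrow> vnk_piece n y"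
proof -
  define d :: nat where "d = 2 ^ (m - n)"
  have d: "(2::real) ^ m = 2 ^ n * real d" "real d > 0" unfolding d_def using assms(1) by (simp_all flip: power_add)
  have lo: "1 - 2 / 2 ^ n = real_of_int (2 ^ m - 2 * int d) / 2 ^ m"
    and hi: "1 - 1 / 2 ^ n = real_of_int (2 ^ m - int d) / 2 ^ m"
    using d(2) by (simp_all add: d(1) field_simps)
  show ?thesis
    unfolding vnk_piece_def lo hi dyadic_grid_le_iff[OF assms(2)] dyadic_grid_less_iff[OF assms(2)]
      dyadic_grid_le_iff[OF assms(3)] dyadic_grid_less_iff[OF assms(3)] ..
qed

lemma vnk_translates_dyadic_cell:
  assumes "k + 1 < 2 ^ m"
  obtains j where "1 \<le> j" "j < 2 ^ m"
    "\<And>x. x \<in> dyadic_cell m k \<Longrightarrow> vnk x = x + (real j - real k) / 2 ^ m"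
proof -
  define y where "y = real k / 2 ^ m"
  have y: "y \<in> dyadic_cell m k" unfolding y_def by (rule left_mem_dyadic_cell)
  moreover have "k < 2 ^ m" using assms by simp
  ultimately have y01: "y \<in> {0..<1}" using dyadic_cell_subset_unit by blast
  then obtain n where n: "vnk_piece n y" by (rule vnk_piece_exists)
  have "n \<le> m" using n y assms by (rule vnk_piece_level)
  define d :: nat where "d = 2 ^ (m - n)"
  have d: "(2::real) ^ m = 2 ^ n * real d" "real d > 0" unfolding d_def using \<open>n \<le> m\<close> by (simp_all flip: power_add)
  define j :: int where "j = int k + 3 * int d - 2 ^ m"
  have "(real_of_int j - real k) / 2 ^ m = 3 / 2 ^ n - 1"
    unfolding j_def using d(2) by (simp add: d(1) field_simps)
  then have vnk_cell: "vnk x = x + (real_of_int j - real k) / 2 ^ m" if "x \<in> dyadic_cell m k" for x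
    using vnk_piece_eq n vnk_piece_dyadic_cell_iff[OF \<open>n \<le> m\<close> that y] by simp
  have "vnk y = real_of_int j / 2 ^ m" using vnk_cell[OF y] unfolding y_def by (simp add: field_simps)
  have "0 < vnk y" "vnk y < 1" using vnk_in_unit[OF y01] by auto
  then have "0 < vnk y * 2 ^ m" "vnk y * 2 ^ m < 2 ^ m" by simp_all
  moreover have "real_of_int j = vnk y * 2 ^ m" using \<open>vnk y = real_of_int j / 2 ^ m\<close> by simp
  ultimately have "0 < real_of_int j" "real_of_int j < 2 ^ m" by linarith+
  then have "1 \<le> nat j" "nat j < 2 ^ m" "real (nat j) = real_of_int j" by (simp_all add: nat_less_iff)
  then show thesis using vnk_cell by (intro that[of "nat j"]) simp_all
qed

lemma vnk_last_dyadic_cell: "x \<in> dyadic_cell m (2 ^ m - 1) \<Longrightarrow> vnk x \<in> dyadic_cell m 0"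
proof -
  assume x: "x \<in> dyadic_cell m (2 ^ m - 1)"
  then have "x < 1" using dyadic_cell_less_one_iff by simp
  have "real (2 ^ m - 1 :: nat) = 2 ^ m - 1" by (simp add: of_nat_diff)
  then have "1 - 1 / 2 ^ m \<le> x" using x unfolding mem_dyadic_cell_iff by (simp add: field_simps)
  moreover have "0 \<le> x" using x by (rule dyadic_cell_nonneg)
  ultimately obtain n where n: "vnk_piece n x" using \<open>x < 1\<close> vnk_piece_exists by auto
  have "m < n"
  proof (rule ccontr)
    assume "\<not> m < n"
    then have "(1::real) / 2 ^ m \<le> 1 / 2 ^ n" by (simp add: field_simps power_increasing)
    then show False using n \<open>1 - 1 / 2 ^ m \<le> x\<close> unfolding vnk_piece_def by linarith
  qed
  then have "(2::real) / 2 ^ n \<le> 1 / 2 ^ m" by (rule two_div_power_le)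
  moreover have "(0::real) < 1 / 2 ^ n" by simp
  ultimately have "0 \<le> vnk x" "vnk x < 1 / 2 ^ m" using vnk_piece_image[OF n] by linarith+
  then show ?thesis unfolding dyadic_cell_def by simp
qed

lemma vnk_piece_start: "1 \<le> n \<Longrightarrow> vnk (1 - 2 / 2 ^ n) = 1 / 2 ^ n"
  using vnk_piece_eq[of n "1 - 2 / 2 ^ n"] unfolding vnk_piece_def by (simp add: field_simps)

section \<open>Iterates and periodic points\<close>

lemma funpow_funpow_commute: "(f ^^ a) ((f ^^ b) x) = (f ^^ b) ((f ^^ a) x)"
proof -
  have "(f ^^ a) ((f ^^ b) x) = (f ^^ (a + b)) x" "(f ^^ b) ((f ^^ a) x) = (f ^^ (b + a)) x"
    by (simp_all add: funpow_add)
  then show ?thesis by (simp add: add.commute)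
qed

lemma funpow_returns:
  assumes "finite S" "bij_betw f S S" "x \<in> S"
  obtains n where "n > 0" "(f ^^ n) x = x"
proof -
  have orbit_in_S: "(f ^^ t) x \<in> S" for t
    using bij_betw_apply[OF bij_betw_funpow[OF assms(2)] assms(3)] .
  have "\<not> inj_on (\<lambda>t. (f ^^ t) x) {..card S}"
  proof
    assume "inj_on (\<lambda>t. (f ^^ t) x) {..card S}"
    moreover have "(\<lambda>t. (f ^^ t) x) ` {..card S} \<subseteq> S" using orbit_in_S by blast
    ultimately have "card {..card S} \<le> card S" using assms(1) by (rule card_inj_on_le)
    then show False by simp
  qed
  then obtain a b where "a \<noteq> b" "(f ^^ a) x = (f ^^ b) x"
    by (auto simp: inj_on_def)
  then obtain a b where ab: "a < b" "(f ^^ a) x = (f ^^ b) x"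
    by (cases a b rule: linorder_cases) auto
  have "(f ^^ a) ((f ^^ (b - a)) x) = (f ^^ (a + (b - a))) x" by (simp add: funpow_add)
  also have "a + (b - a) = b" using ab(1) by simp
  finally have "(f ^^ a) ((f ^^ (b - a)) x) = (f ^^ a) x" using ab(2) by simp
  moreover have "inj_on (f ^^ a) S" using bij_betw_funpow[OF assms(2)] by (rule bij_betw_imp_inj_on)
  ultimately have "(f ^^ (b - a)) x = x" using orbit_in_S assms(3) by (simp add: inj_on_eq_iff)
  then show thesis using ab(1) by (intro that[of "b - a"]) auto
qed

lemma funpow_cycle_reaches:
  assumes "n > 0" "(f ^^ n) x = x"
  shows "(f ^^ (n * i + j - i)) ((f ^^ i) x) = (f ^^ j) x"
proof -
  have "n * i + j - i + i = n * i + j" using assms(1) by (cases n) auto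
  then have "(f ^^ (n * i + j - i)) ((f ^^ i) x) = (f ^^ (n * i + j)) x"
    by (simp flip: funpow_add[THEN fun_cong, unfolded comp_apply])
  also have "\<dots> = (f ^^ j) x"
    using funpow_mod_eq[OF assms(2), of "n * i + j"] funpow_mod_eq[OF assms(2), of j] by simp
  finally show ?thesis .
qed

lemma range_funpow_periodic:
  assumes "n > 0" "(f ^^ n) x = x"
  shows "range (\<lambda>t. (f ^^ t) x) = (\<lambda>t. (f ^^ t) x) ` {..<n}"
proof -
  have "(f ^^ t) x \<in> (\<lambda>t. (f ^^ t) x) ` {..<n}" for t
    using funpow_mod_eq[OF assms(2), of t] assms(1) by (intro image_eqI[where x = "t mod n"]) simp_all
  then show ?thesis by auto
qed

lemma funpow_periodic_point:
  assumes "n > 0" "(F ^^ n) x = x"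
  shows "periodic_pt F ((F ^^ t) x)"
  unfolding periodic_pt_def
  using assms funpow_funpow_commute[where f = F and a = n and b = t and x = x] by auto

lemma bij_betw_periodic_points:
  fixes F :: "real \<Rightarrow> real"
  assumes "inj_on F S" "F ` S \<subseteq> S"
  defines "P \<equiv> {x \<in> S. periodic_pt F x}"
  shows "bij_betw F P P"
proof -
  have funpow_in_S: "(F ^^ t) x \<in> S" if "x \<in> S" for x t
    using that assms(2) by (induction t) auto
  have "F ` P \<subseteq> P"
  proof
    fix y assume "y \<in> F ` P"
    then obtain x n where "y = F x" "x \<in> S" "n > 0" "(F ^^ n) x = x"
      unfolding P_def periodic_pt_def by blast
    then show "y \<in> P" using assms(2) funpow_periodic_point[of n F x 1] unfolding P_def by auto
  qed
  moreover have "P \<subseteq> F ` P"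
  proof
    fix y assume "y \<in> P"
    then obtain n where n: "n > 0" "(F ^^ n) y = y" "y \<in> S" unfolding P_def periodic_pt_def by auto
    have "F ((F ^^ (n - 1)) y) = (F ^^ n) y" using n(1) by (cases n) auto
    then have "F ((F ^^ (n - 1)) y) = y" using n(2) by simp
    moreover have "(F ^^ (n - 1)) y \<in> P"
      using funpow_periodic_point[OF n(1,2)] funpow_in_S[OF n(3)] unfolding P_def by blast
    ultimately show "y \<in> F ` P" by (intro image_eqI[where x="(F ^^ (n - 1)) y"]) simp_all
  qed
  moreover have "inj_on F P" using assms(1) unfolding P_def by (rule inj_on_subset) auto
  ultimately show ?thesis unfolding bij_betw_def by blast
qed

lemma image_nonperiodic_points:
  fixes F :: "real \<Rightarrow> real"
  assumes "inj_on F S" "F ` S \<subseteq> S"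
  defines "P \<equiv> {x \<in> S. periodic_pt F x}"
  shows "F ` (S - P) \<subseteq> S - P"
proof
  fix y assume "y \<in> F ` (S - P)"
  then obtain x where x: "x \<in> S" "x \<notin> P" "y = F x" by auto
  have "y \<notin> P"
  proof
    assume "y \<in> P"
    then have "y \<in> F ` P" using bij_betw_periodic_points[OF assms(1,2)] unfolding P_def bij_betw_def by blast
    then obtain x' where "x' \<in> P" "F x' = F x" using x(3) by auto
    moreover have "x' \<in> S" using \<open>x' \<in> P\<close> unfolding P_def by simp
    ultimately have "x' = x" using assms(1) x(1) by (auto dest: inj_onD)
    then show False using \<open>x' \<in> P\<close> x(2) by simp
  qed
  then show "y \<in> S - P" using x assms(2) by auto
qed

lemma periodic_interval_bounds:
  assumes "periodic_interval F x y"
  shows "x \<in> unitI" "y \<le> 1"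
proof -
  have "x < y" "{x..<y} \<subseteq> unitI" using assms unfolding periodic_interval_def Iper_def by auto
  then show "x \<in> unitI" by auto
  show "y \<le> 1"
  proof (rule ccontr)
    assume "\<not> y \<le> 1"
    then have "1 \<in> {x..<y}" using \<open>x \<in> unitI\<close> unfolding unitI_def by auto
    then show False using \<open>{x..<y} \<subseteq> unitI\<close> \<open>x \<in> unitI\<close> unfolding unitI_def by auto
  qed
qed

lemma periodic_intervalI:
  assumes "x < y" "\<And>u. u \<in> {x..<y} \<Longrightarrow> u \<in> Iper F \<and> min_period F u = p"
  shows "periodic_interval F x y"
  unfolding periodic_interval_def using assms by auto

lemma periodic_intervalD:
  assumes "periodic_interval F x y"
  shows "x < y" "{x..<y} \<subseteq> Iper F" "u \<in> {x..<y} \<Longrightarrow> min_period F u = min_period F x"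
proof -
  show "x < y" "{x..<y} \<subseteq> Iper F" using assms unfolding periodic_interval_def by simp_all
  have same: "\<forall>u\<in>{x..<y}. \<forall>v\<in>{x..<y}. min_period F u = min_period F v"
    using assms unfolding periodic_interval_def by blast
  show "min_period F u = min_period F x" if "u \<in> {x..<y}"
    using bspec[OF bspec[OF same that]] \<open>x < y\<close> by simp
qed

lemma max_periodic_interval_periodic: "max_periodic_interval F x y \<Longrightarrow> periodic_interval F x y"
  unfolding max_periodic_interval_def by (rule conjunct1)

section \<open>The rotated odometer on dyadic cells\<close>

locale rotated_odometer =
  fixes N :: nat and \<pi> :: "nat \<Rightarrow> nat"
  assumes perm: "\<pi> permutes {..<2 ^ N}"
begin

abbreviation R :: "real \<Rightarrow> real" where
  "R \<equiv> Rexch (2 ^ N) \<pi>"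

abbreviation F :: "real \<Rightarrow> real" where
  "F \<equiv> Frot (2 ^ N) \<pi>"

definition cell_perm :: "nat \<Rightarrow> nat \<Rightarrow> nat" where
  "cell_perm m k = \<pi> (k div 2 ^ (m - N)) * 2 ^ (m - N) + k mod 2 ^ (m - N)"

lemma cell_perm_base: "cell_perm N k = \<pi> k"
  unfolding cell_perm_def by simp

lemma Rexch_dyadic_cell:
  assumes "N \<le> m" "k < 2 ^ m" "x \<in> dyadic_cell m k"
  shows "R x = x + (real (cell_perm m k) - real k) / 2 ^ m" "cell_perm m k < 2 ^ m"
proof -
  define d :: nat where "d = 2 ^ (m - N)"
  have d: "(2::nat) ^ m = 2 ^ N * d" "d > 0" unfolding d_def using assms(1) by (simp_all flip: power_add)
  then have d_real: "(2::real) ^ m = 2 ^ N * real d" by (metis of_nat_mult of_nat_numeral of_nat_power)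
  have "x \<in> {0..<1}" using assms(2,3) dyadic_cell_subset_unit by blast
  moreover have "dyadic_index N x = k div d"
    unfolding d_def by (rule dyadic_index_eq[OF dyadic_cell_parent[OF assms(3,1)]])
  ultimately have "R x = x + (real (\<pi> (k div d)) - real (k div d)) / 2 ^ N"
    unfolding Rexch_def unitI_def dyadic_index_def by simp
  also have "\<dots> = x + (real (\<pi> (k div d)) * real d - real (k div d) * real d) / 2 ^ m"
    unfolding d_real using d(2) by (simp add: field_simps)
  finally have "R x = x + (real (\<pi> (k div d)) * real d - real (k div d) * real d) / 2 ^ m" .
  moreover have "real k = real (k div d) * real d + real (k mod d)"
    by (metis div_mult_mod_eq of_nat_add of_nat_mult)
  ultimately show "R x = x + (real (cell_perm m k) - real k) / 2 ^ m"
    unfolding cell_perm_def d_def[symmetric] by simp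
  have "k div d < 2 ^ N" using assms(2) d by (simp add: div_less_iff_less_mult mult.commute)
  then have "\<pi> (k div d) < 2 ^ N" using permutes_in_image[OF perm] by simp
  have "\<pi> (k div d) * d + k mod d < (\<pi> (k div d) + 1) * d" using d(2) by simp
  also have "\<dots> \<le> 2 ^ N * d" using \<open>\<pi> (k div d) < 2 ^ N\<close> by (intro mult_right_mono) auto
  finally show "cell_perm m k < 2 ^ m" unfolding cell_perm_def d_def[symmetric] d(1) .
qed

lemma Rexch_maps_dyadic_cell:
  assumes "N \<le> m" "k < 2 ^ m" "x \<in> dyadic_cell m k"
  shows "R x \<in> dyadic_cell m (cell_perm m k)"
  unfolding Rexch_dyadic_cell[OF assms] using dyadic_cell_translate[OF assms(3)] .

lemma bij_betw_Rexch: "bij_betw R {0..<1} {0..<1}"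
proof -
  have R_cell: "R x \<in> dyadic_cell N (\<pi> (dyadic_index N x))" "\<pi> (dyadic_index N x) < 2 ^ N"
    if "x \<in> {0..<1}" for x
  proof -
    have "dyadic_index N x < 2 ^ N" "x \<in> dyadic_cell N (dyadic_index N x)"
      using that dyadic_index_less mem_dyadic_cell_index by auto
    from Rexch_maps_dyadic_cell[OF order_refl this] Rexch_dyadic_cell(2)[OF order_refl this]
    show "R x \<in> dyadic_cell N (\<pi> (dyadic_index N x))" "\<pi> (dyadic_index N x) < 2 ^ N"
      unfolding cell_perm_base .
  qed
  have "inj_on R {0..<1}"
  proof (rule inj_onI)
    fix x y assume x: "x \<in> {0..<1}" and y: "y \<in> {0..<1}" and eq: "R x = R y"
    have "\<pi> (dyadic_index N x) = \<pi> (dyadic_index N y)"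
      using dyadic_index_eq[OF R_cell(1)[OF x]] dyadic_index_eq[OF R_cell(1)[OF y]] eq by simp
    then have "dyadic_index N x = dyadic_index N y" using permutes_inj[OF perm] by (simp add: inj_eq)
    then show "x = y" using eq x y unfolding Rexch_def unitI_def dyadic_index_def by simp
  qed
  moreover have "R ` {0..<1} \<subseteq> {0..<1}"
    using R_cell dyadic_cell_subset_unit by blast
  moreover have "{0..<1} \<subseteq> R ` {0..<1}"
  proof
    fix y :: real assume y: "y \<in> {0..<1}"
    define l where "l = dyadic_index N y"
    have "l < 2 ^ N" unfolding l_def using y dyadic_index_less by simp
    then have "l \<in> \<pi> ` {..<2 ^ N}" using permutes_image[OF perm] by simp
    then obtain k where k: "k < 2 ^ N" "\<pi> k = l" by auto
    define x where "x = y + (real k - real l) / 2 ^ N"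
    have "y \<in> dyadic_cell N l" unfolding l_def using y mem_dyadic_cell_index by simp
    then have x: "x \<in> dyadic_cell N k" unfolding x_def by (rule dyadic_cell_translate)
    have "R x = x + (real l - real k) / 2 ^ N"
      using Rexch_dyadic_cell(1)[OF order_refl k(1) x] k(2) by (simp add: cell_perm_base)
    also have "\<dots> = y" unfolding x_def by (simp add: field_simps)
    finally show "y \<in> R ` {0..<1}" using x k(1) dyadic_cell_subset_unit by blast
  qed
  ultimately show ?thesis unfolding bij_betw_def by blast
qed

lemma Frot_image: "F ` {0..<1} = {0<..<1}"
  unfolding Frot_def image_comp[symmetric] bij_betw_imp_surj_on[OF bij_betw_Rexch] by (rule vnk_image)

lemma Frot_image_subset: "F ` {0..<1} \<subseteq> {0..<1}"
  unfolding Frot_image by auto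

lemma inj_on_Frot: "inj_on F {0..<1}"
proof -
  have "inj_on vnk (R ` {0..<1})" using inj_on_vnk bij_betw_imp_surj_on[OF bij_betw_Rexch] by simp
  then show ?thesis unfolding Frot_def by (rule comp_inj_on[OF bij_betw_imp_inj_on[OF bij_betw_Rexch]])
qed

definition wraps :: "nat \<Rightarrow> nat \<Rightarrow> bool" where
  "wraps m k \<longleftrightarrow> cell_perm m k = 2 ^ m - 1"

definition cell_map :: "nat \<Rightarrow> nat \<Rightarrow> nat" where
  "cell_map m k = dyadic_index m (F (real k / 2 ^ m))"

lemma Rexch_left_endpoint:
  assumes "N \<le> m" "k < 2 ^ m"
  shows "R (real k / 2 ^ m) = real (cell_perm m k) / 2 ^ m"
  using Rexch_dyadic_cell(1)[OF assms left_mem_dyadic_cell] by (simp add: field_simps)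

lemma Frot_translates_dyadic_cell:
  assumes "N \<le> m" "k < 2 ^ m" "\<not> wraps m k"
  shows "1 \<le> cell_map m k" "cell_map m k < 2 ^ m"
    and "\<And>x. x \<in> dyadic_cell m k \<Longrightarrow> F x = x + (real (cell_map m k) - real k) / 2 ^ m"
proof -
  define r where "r = cell_perm m k"
  have "r < 2 ^ m" "r \<noteq> 2 ^ m - 1"
    using Rexch_dyadic_cell(2)[OF assms(1,2) left_mem_dyadic_cell] assms(3) unfolding r_def wraps_def by auto
  then have "r + 1 < 2 ^ m" by linarith
  then obtain j where j: "1 \<le> j" "j < 2 ^ m"
    and vnk_r: "\<And>y. y \<in> dyadic_cell m r \<Longrightarrow> vnk y = y + (real j - real r) / 2 ^ m"
    using vnk_translates_dyadic_cell[OF \<open>r + 1 < 2 ^ m\<close>] by blast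
  have F_cell: "F x = x + (real j - real k) / 2 ^ m" if x: "x \<in> dyadic_cell m k" for x
  proof -
    have R_x: "R x = x + (real r - real k) / 2 ^ m" "R x \<in> dyadic_cell m r"
      using Rexch_dyadic_cell(1)[OF assms(1,2) x] Rexch_maps_dyadic_cell[OF assms(1,2) x] unfolding r_def by auto
    have "F x = R x + (real j - real r) / 2 ^ m" unfolding Frot_def using vnk_r[OF R_x(2)] by simp
    also have "\<dots> = x + (real j - real k) / 2 ^ m" unfolding R_x(1) by (simp add: field_simps)
    finally show ?thesis .
  qed
  have "F (real k / 2 ^ m) = real j / 2 ^ m"
    using F_cell[OF left_mem_dyadic_cell] by (simp add: field_simps)
  then have "cell_map m k = j" unfolding cell_map_def using dyadic_index_eq[OF left_mem_dyadic_cell] by simp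
  then show "1 \<le> cell_map m k" "cell_map m k < 2 ^ m"
    and "\<And>x. x \<in> dyadic_cell m k \<Longrightarrow> F x = x + (real (cell_map m k) - real k) / 2 ^ m"
    using j F_cell by simp_all
qed

lemma Frot_wrapping_dyadic_cell:
  assumes "N \<le> m" "k < 2 ^ m" "wraps m k" "x \<in> dyadic_cell m k"
  shows "F x \<in> dyadic_cell m 0"
  using Rexch_maps_dyadic_cell[OF assms(1,2,4)] assms(3) vnk_last_dyadic_cell
  unfolding wraps_def Frot_def by simp

lemma cell_map_wrapping:
  assumes "N \<le> m" "k < 2 ^ m" "wraps m k"
  shows "cell_map m k = 0"
  unfolding cell_map_def using Frot_wrapping_dyadic_cell[OF assms left_mem_dyadic_cell] by (rule dyadic_index_eq)

lemma cell_map_eq_0_iff: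
  assumes "N \<le> m" "k < 2 ^ m"
  shows "cell_map m k = 0 \<longleftrightarrow> wraps m k"
  using cell_map_wrapping[OF assms] Frot_translates_dyadic_cell(1)[OF assms] by (cases "wraps m k") simp_all

lemma Frot_left_endpoint:
  assumes "N \<le> m" "k < 2 ^ m" "\<not> wraps m k"
  shows "F (real k / 2 ^ m) = real (cell_map m k) / 2 ^ m"
  using Frot_translates_dyadic_cell(3)[OF assms left_mem_dyadic_cell] by (simp add: field_simps)

lemma cell_map_less:
  assumes "N \<le> m" "k < 2 ^ m"
  shows "cell_map m k < 2 ^ m"
  using cell_map_wrapping[OF assms] Frot_translates_dyadic_cell(2)[OF assms] by (cases "wraps m k") simp_all

lemma Frot_maps_dyadic_cell:
  assumes "N \<le> m" "k < 2 ^ m" "x \<in> dyadic_cell m k"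
  shows "F x \<in> dyadic_cell m (cell_map m k)"
proof (cases "wraps m k")
  case True
  then show ?thesis
    using Frot_wrapping_dyadic_cell[OF assms(1,2) True assms(3)] cell_map_wrapping[OF assms(1,2) True] by simp
next
  case False
  then show ?thesis
    using Frot_translates_dyadic_cell(3)[OF assms(1,2) False assms(3)] dyadic_cell_translate[OF assms(3)] by simp
qed

lemma funpow_cell_map_less: "N \<le> m \<Longrightarrow> k < 2 ^ m \<Longrightarrow> (cell_map m ^^ t) k < 2 ^ m"
  by (induction t) (simp_all add: cell_map_less)

lemma funpow_Frot_dyadic_cell:
  assumes "N \<le> m" "k < 2 ^ m" "x \<in> dyadic_cell m k"
  shows "(F ^^ t) x \<in> dyadic_cell m ((cell_map m ^^ t) k)"
  by (induction t) (simp_all add: assms Frot_maps_dyadic_cell funpow_cell_map_less)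

lemma bij_betw_cell_map:
  assumes "N \<le> m"
  shows "bij_betw (cell_map m) {..<2 ^ m} {..<2 ^ m}"
proof -
  have unit: "real k / 2 ^ m \<in> {0..<1}" if "k < 2 ^ m" for k
    using dyadic_cell_subset_unit[OF that] left_mem_dyadic_cell by blast
  have "inj_on (cell_map m) {..<2 ^ m}"
  proof (rule inj_onI)
    fix k l assume k: "k \<in> {..<2 ^ m}" and l: "l \<in> {..<2 ^ m}" and eq: "cell_map m k = cell_map m l"
    consider "wraps m k" "wraps m l" | "\<not> wraps m k" "\<not> wraps m l" | "wraps m k \<noteq> wraps m l" by blast
    then show "k = l"
    proof cases
      case 1
      then have "R (real k / 2 ^ m) = R (real l / 2 ^ m)"
        using Rexch_left_endpoint[OF assms] k l unfolding wraps_def by simp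
      then have "real k / 2 ^ m = real l / 2 ^ m"
        using bij_betw_imp_inj_on[OF bij_betw_Rexch] unit k l by (simp add: inj_on_eq_iff)
      then show ?thesis by simp
    next
      case 2
      then have "F (real k / 2 ^ m) = F (real l / 2 ^ m)"
        using Frot_left_endpoint[OF assms] k l eq by simp
      then have "real k / 2 ^ m = real l / 2 ^ m"
        using inj_on_Frot unit k l by (simp add: inj_on_eq_iff)
      then show ?thesis by simp
    next
      case 3
      then show ?thesis using cell_map_eq_0_iff[OF assms, of k] cell_map_eq_0_iff[OF assms, of l] k l eq by auto
    qed
  qed
  moreover have "cell_map m ` {..<2 ^ m} \<subseteq> {..<2 ^ m}"
    using cell_map_less[OF assms] by auto
  ultimately show ?thesis unfolding bij_betw_def using endo_inj_surj by blast
qed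

lemma cell_map_Suc:
  assumes "N \<le> m" "k < 2 ^ m" "\<not> wraps m k" "b < 2"
  shows "cell_map (Suc m) (2 * k + b) = 2 * cell_map m k + b"
proof -
  define x where "x = real (2 * k + b) / 2 ^ Suc m"
  have "x \<in> dyadic_cell m ((2 * k + b) div 2 ^ (Suc m - m))"
    unfolding x_def by (rule dyadic_cell_parent[OF left_mem_dyadic_cell]) simp
  then have "x \<in> dyadic_cell m k" using assms(4) by simp
  then have "F x = x + (real (cell_map m k) - real k) / 2 ^ m"
    by (rule Frot_translates_dyadic_cell(3)[OF assms(1-3)])
  also have "\<dots> = real (2 * cell_map m k + b) / 2 ^ Suc m"
    unfolding x_def by (simp add: field_simps)
  finally have "F x = real (2 * cell_map m k + b) / 2 ^ Suc m" .
  then show ?thesis unfolding cell_map_def[of "Suc m"] x_def[symmetric]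
    by (simp only: dyadic_index_eq[OF left_mem_dyadic_cell])
qed

lemma cell_map_Suc_wrapping:
  assumes "N \<le> m" "k < 2 ^ m" "wraps m k"
  shows "cell_map (Suc m) (2 * k) = 1"
proof -
  have "real (cell_perm m k) = 2 ^ m - 1" using assms(3) unfolding wraps_def by (simp add: of_nat_diff)
  then have "R (real (2 * k) / 2 ^ Suc m) = 1 - 2 / 2 ^ Suc m"
    using Rexch_left_endpoint[OF assms(1,2)] by (simp add: field_simps)
  then have F_2k: "F (real (2 * k) / 2 ^ Suc m) = real 1 / 2 ^ Suc m"
    unfolding Frot_def using vnk_piece_start[of "Suc m"] by simp
  show ?thesis unfolding cell_map_def F_2k by (rule dyadic_index_eq[OF left_mem_dyadic_cell])
qed

section \<open>The cycle of the first cell\<close>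

definition zero_orbit :: "nat \<Rightarrow> nat set" where
  "zero_orbit m = range (\<lambda>t. (cell_map m ^^ t) 0)"

lemma cell_map_returns:
  assumes "N \<le> m" "k < 2 ^ m"
  obtains n where "n > 0" "(cell_map m ^^ n) k = k"
  using funpow_returns[OF finite_lessThan bij_betw_cell_map[OF assms(1)]] assms(2) by blast

lemma funpow_cell_map_Suc:
  assumes "N \<le> m" "c < 2 ^ m" "b < 2" "\<forall>i<j. \<not> wraps m ((cell_map m ^^ i) c)"
  shows "(cell_map (Suc m) ^^ j) (2 * c + b) = 2 * (cell_map m ^^ j) c + b"
  using assms(4)
proof (induction j)
  case 0
  then show ?case by simp
next
  case (Suc j)
  then have "(cell_map (Suc m) ^^ Suc j) (2 * c + b) = cell_map (Suc m) (2 * (cell_map m ^^ j) c + b)"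
    by simp
  also have "\<dots> = 2 * (cell_map m ^^ Suc j) c + b"
    using cell_map_Suc[OF assms(1) funpow_cell_map_less[OF assms(1,2)] _ assms(3)] Suc.prems by simp
  finally show ?case .
qed

lemma zero_cycle_wraps_last:
  assumes "N \<le> m"
  obtains L where "L > 0" "(cell_map m ^^ L) 0 = 0"
    "\<forall>i<L - 1. \<not> wraps m ((cell_map m ^^ i) 0)" "wraps m ((cell_map m ^^ (L - 1)) 0)"
proof -
  let ?\<sigma> = "cell_map m"
  define L where "L = (LEAST n. n > 0 \<and> (?\<sigma> ^^ n) 0 = 0)"
  obtain M where "M > 0" "(?\<sigma> ^^ M) 0 = 0" using cell_map_returns[OF assms, of 0] by auto
  then have "L > 0 \<and> (?\<sigma> ^^ L) 0 = 0" unfolding L_def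
    using LeastI[of "\<lambda>n. n > 0 \<and> (?\<sigma> ^^ n) 0 = 0" M] by simp
  then have L: "L > 0" "(?\<sigma> ^^ L) 0 = 0" by simp_all
  have no_return: "(?\<sigma> ^^ j) 0 \<noteq> 0" if "0 < j" "j < L" for j
    using not_less_Least[of j "\<lambda>n. n > 0 \<and> (?\<sigma> ^^ n) 0 = 0"] that unfolding L_def by auto
  have less: "(?\<sigma> ^^ j) 0 < 2 ^ m" for j using funpow_cell_map_less[OF assms] by simp
  have "\<forall>i<L - 1. \<not> wraps m ((?\<sigma> ^^ i) 0)"
  proof (intro allI impI notI)
    fix i assume "i < L - 1" "wraps m ((?\<sigma> ^^ i) 0)"
    then have "(?\<sigma> ^^ Suc i) 0 = 0" using cell_map_wrapping[OF assms less] by simp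
    moreover have "Suc i < L" using \<open>i < L - 1\<close> by linarith
    ultimately show False using no_return[of "Suc i"] by simp
  qed
  moreover have "?\<sigma> ((?\<sigma> ^^ (L - 1)) 0) = 0" using L by (cases L) simp_all
  then have "wraps m ((?\<sigma> ^^ (L - 1)) 0)" using cell_map_eq_0_iff[OF assms less] by simp
  ultimately show thesis using L by (intro that) simp_all
qed

lemma zero_orbit_Suc:
  assumes "N \<le> m" "k \<in> zero_orbit m"
  shows "2 * k \<in> zero_orbit (Suc m)" "2 * k + 1 \<in> zero_orbit (Suc m)"
proof -
  let ?\<sigma> = "cell_map m" and ?\<sigma>' = "cell_map (Suc m)"
  obtain L where L: "L > 0" "(?\<sigma> ^^ L) 0 = 0"
    and no_wrap: "\<forall>i<L - 1. \<not> wraps m ((?\<sigma> ^^ i) 0)" and wrap: "wraps m ((?\<sigma> ^^ (L - 1)) 0)"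
    using assms(1) by (rule zero_cycle_wraps_last)
  have less: "(?\<sigma> ^^ j) 0 < 2 ^ m" for j using funpow_cell_map_less[OF assms(1)] by simp
  have left: "(?\<sigma>' ^^ j) 0 = 2 * (?\<sigma> ^^ j) 0" if "j \<le> L - 1" for j
    using funpow_cell_map_Suc[OF assms(1), of 0 0 j] no_wrap that by simp
  have "(?\<sigma>' ^^ L) 0 = ?\<sigma>' ((?\<sigma>' ^^ (L - 1)) 0)" using L(1) by (cases L) simp_all
  also have "\<dots> = 1" using left[of "L - 1"] cell_map_Suc_wrapping[OF assms(1) less wrap] by simp
  finally have right: "(?\<sigma>' ^^ (j + L)) 0 = 2 * (?\<sigma> ^^ j) 0 + 1" if "j \<le> L - 1" for j
    using funpow_cell_map_Suc[OF assms(1), of 0 1 j] no_wrap that by (simp add: funpow_add)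
  obtain t where "k = (?\<sigma> ^^ t) 0" using assms(2) unfolding zero_orbit_def by auto
  moreover have "t mod L < L" using L(1) by simp
  ultimately have "k = (?\<sigma> ^^ (t mod L)) 0" "t mod L \<le> L - 1"
    using funpow_mod_eq[OF L(2)] by simp_all
  then have "2 * k = (?\<sigma>' ^^ (t mod L)) 0" "2 * k + 1 = (?\<sigma>' ^^ (t mod L + L)) 0"
    using left right by simp_all
  then show "2 * k \<in> zero_orbit (Suc m)" "2 * k + 1 \<in> zero_orbit (Suc m)"
    unfolding zero_orbit_def by (auto intro: range_eqI)
qed

lemma zero_orbit_refine:
  assumes "N \<le> m" "k < 2 ^ m" "k div 2 ^ (m - N) \<in> zero_orbit N"
  shows "k \<in> zero_orbit m"
  using assms
proof (induction m arbitrary: k rule: nat_induct_at_least)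
  case base
  then show ?case by simp
next
  case (Suc m)
  have "k div 2 div 2 ^ (m - N) = k div 2 ^ (Suc m - N)"
    using Suc.hyps by (simp add: Suc_diff_le div_mult2_eq)
  then have "k div 2 \<in> zero_orbit m" using Suc.IH[of "k div 2"] Suc.prems by simp
  then have "2 * (k div 2) \<in> zero_orbit (Suc m)" "2 * (k div 2) + 1 \<in> zero_orbit (Suc m)"
    using zero_orbit_Suc[OF Suc.hyps] by blast+
  moreover have "k = 2 * (k div 2) \<or> k = 2 * (k div 2) + 1" by presburger
  ultimately show ?case by auto
qed

lemma dyadic_index_zero_orbit:
  assumes "N \<le> m" "x \<in> {0..<1}" "dyadic_index N x \<in> zero_orbit N"
  shows "dyadic_index m x \<in> zero_orbit m"
proof -
  have "x \<in> dyadic_cell m (dyadic_index m x)" using assms(2) mem_dyadic_cell_index by simp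
  then have "dyadic_index m x div 2 ^ (m - N) = dyadic_index N x"
    using dyadic_index_eq[OF dyadic_cell_parent[OF _ assms(1)]] by simp
  moreover have "dyadic_index m x < 2 ^ m" using assms(2) dyadic_index_less by simp
  ultimately show ?thesis using assms(3) by (intro zero_orbit_refine[OF assms(1)]) simp_all
qed

lemma lessThan_subset_zero_orbit: "N \<le> m \<Longrightarrow> {..<2 ^ (m - N)} \<subseteq> zero_orbit m"
proof
  fix k :: nat assume "N \<le> m" and k: "k \<in> {..<2 ^ (m - N)}"
  have "(2::nat) ^ (m - N) \<le> 2 ^ m" by (simp add: power_increasing)
  then have "k < 2 ^ m" using k less_le_trans[of k "2 ^ (m - N)" "2 ^ m"] by simp
  moreover have "k div 2 ^ (m - N) \<in> zero_orbit N"
    using k unfolding zero_orbit_def by (intro range_eqI[of _ _ 0]) simp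
  ultimately show "k \<in> zero_orbit m" by (rule zero_orbit_refine[OF \<open>N \<le> m\<close>])
qed

lemma Frot_not_periodic:
  assumes "x \<in> {0..<1}" "dyadic_index N x \<in> zero_orbit N"
  shows "\<not> periodic_pt F x"
proof
  assume "periodic_pt F x"
  then obtain n where n: "n > 0" "(F ^^ n) x = x" unfolding periodic_pt_def by blast
  define m where "m = N + n"
  let ?\<sigma> = "cell_map m"
  have "N \<le> m" unfolding m_def by simp
  define k where "k = dyadic_index m x"
  have x: "x \<in> dyadic_cell m k" "k < 2 ^ m"
    unfolding k_def using assms(1) mem_dyadic_cell_index dyadic_index_less by simp_all
  have "(?\<sigma> ^^ n) k = k"
    using dyadic_index_eq[OF funpow_Frot_dyadic_cell[OF \<open>N \<le> m\<close> x(2,1), of n]] n(2) dyadic_index_eq[OF x(1)]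
    by simp
  obtain i where i: "k = (?\<sigma> ^^ i) 0"
    using dyadic_index_zero_orbit[OF \<open>N \<le> m\<close> assms] unfolding zero_orbit_def k_def by auto
  obtain M where M: "M > 0" "(?\<sigma> ^^ M) 0 = 0" using cell_map_returns[OF \<open>N \<le> m\<close>, of 0] by auto
  define s where "s = M * i - i"
  have "(?\<sigma> ^^ s) k = 0" unfolding s_def i using funpow_cycle_reaches[OF M, of i 0] by simp
  then have "(?\<sigma> ^^ n) 0 = 0"
    using \<open>(?\<sigma> ^^ n) k = k\<close> funpow_funpow_commute[where f = ?\<sigma> and a = n and b = s and x = k] by simp
  then have "zero_orbit m = (\<lambda>t. (?\<sigma> ^^ t) 0) ` {..<n}"
    unfolding zero_orbit_def by (rule range_funpow_periodic[OF n(1)])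
  then have "finite (zero_orbit m)" "card (zero_orbit m) \<le> n"
    using card_image_le[of "{..<n}"] by simp_all
  moreover have "{..<2 ^ n} \<subseteq> zero_orbit m"
    using lessThan_subset_zero_orbit[OF \<open>N \<le> m\<close>] unfolding m_def by simp
  ultimately have "2 ^ n \<le> n" using card_mono[of "zero_orbit m" "{..<2 ^ n}"] by simp
  then show False using less_exp[of n] by simp
qed

section \<open>Periodic and non-periodic points\<close>

lemma funpow_cell_map_not_in_zero_orbit:
  assumes "k < 2 ^ N" "k \<notin> zero_orbit N"
  shows "(cell_map N ^^ j) k \<notin> zero_orbit N"
proof
  assume "(cell_map N ^^ j) k \<in> zero_orbit N"
  then obtain t where t: "(cell_map N ^^ j) k = (cell_map N ^^ t) 0" unfolding zero_orbit_def by auto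
  obtain M where M: "M > 0" "(cell_map N ^^ M) k = k" using cell_map_returns[OF order_refl assms(1)] by auto
  have "k = (cell_map N ^^ (M * j - j)) ((cell_map N ^^ j) k)" using funpow_cycle_reaches[OF M, of j 0] by simp
  also have "\<dots> = (cell_map N ^^ (M * j - j + t)) 0" unfolding t by (simp add: funpow_add)
  finally have "k \<in> zero_orbit N" unfolding zero_orbit_def by (rule range_eqI)
  then show False using assms(2) by simp
qed

lemma not_wraps_off_zero_orbit:
  assumes "k < 2 ^ N" "k \<notin> zero_orbit N"
  shows "\<not> wraps N k"
proof
  assume "wraps N k"
  then have "(cell_map N ^^ 1) k = (cell_map N ^^ 0) 0" using cell_map_wrapping[OF order_refl assms(1)] by simp
  then have "(cell_map N ^^ 1) k \<in> zero_orbit N" unfolding zero_orbit_def by (rule range_eqI)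
  then show False using funpow_cell_map_not_in_zero_orbit[OF assms] by blast
qed

lemma funpow_Frot_off_zero_orbit:
  assumes "k < 2 ^ N" "k \<notin> zero_orbit N" "x \<in> dyadic_cell N k"
  shows "(F ^^ j) x = x + (real ((cell_map N ^^ j) k) - real k) / 2 ^ N"
proof (induction j)
  case 0
  show ?case by simp
next
  case (Suc j)
  define k' where "k' = (cell_map N ^^ j) k"
  have "k' < 2 ^ N" "k' \<notin> zero_orbit N"
    unfolding k'_def using funpow_cell_map_less[OF order_refl assms(1)] funpow_cell_map_not_in_zero_orbit[OF assms(1,2)]
    by simp_all
  then have "\<not> wraps N k'" by (rule not_wraps_off_zero_orbit)
  moreover have "(F ^^ j) x \<in> dyadic_cell N k'"
    unfolding k'_def by (rule funpow_Frot_dyadic_cell[OF order_refl assms(1,3)])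
  ultimately have "(F ^^ Suc j) x = (F ^^ j) x + (real (cell_map N k') - real k') / 2 ^ N"
    using Frot_translates_dyadic_cell(3)[OF order_refl \<open>k' < 2 ^ N\<close>] by simp
  also have "\<dots> = x + (real ((cell_map N ^^ Suc j) k) - real k) / 2 ^ N"
    unfolding Suc.IH k'_def by (simp add: diff_divide_distrib)
  finally show ?case .
qed

lemma funpow_Frot_fixed_iff:
  assumes "k < 2 ^ N" "k \<notin> zero_orbit N" "x \<in> dyadic_cell N k"
  shows "(F ^^ n) x = x \<longleftrightarrow> (cell_map N ^^ n) k = k"
  unfolding funpow_Frot_off_zero_orbit[OF assms] by simp

lemma Iper_eq: "Iper F = {x \<in> {0..<1}. dyadic_index N x \<notin> zero_orbit N}"
proof (intro set_eqI iffI)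
  fix x assume "x \<in> Iper F"
  then show "x \<in> {x \<in> {0..<1}. dyadic_index N x \<notin> zero_orbit N}"
    using Frot_not_periodic unfolding Iper_def unitI_def by auto
next
  fix x assume x: "x \<in> {x \<in> {0..<1}. dyadic_index N x \<notin> zero_orbit N}"
  define k where "k = dyadic_index N x"
  have k: "k < 2 ^ N" "k \<notin> zero_orbit N" "x \<in> dyadic_cell N k"
    unfolding k_def using x dyadic_index_less mem_dyadic_cell_index by auto
  obtain n where "n > 0" "(cell_map N ^^ n) k = k" using cell_map_returns[OF order_refl k(1)] by auto
  then have "periodic_pt F x" unfolding periodic_pt_def funpow_Frot_fixed_iff[OF k] by blast
  then show "x \<in> Iper F" using x unfolding Iper_def unitI_def by simp
qed

lemma Inp_eq: "Inp F = {x \<in> {0..<1}. dyadic_index N x \<in> zero_orbit N}"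
  unfolding Inp_def Iper_eq unitI_def by auto

lemma Iper_dyadic_cell:
  assumes "w \<in> Iper F" "w \<in> dyadic_cell N k" "z \<in> dyadic_cell N k"
  shows "z \<in> Iper F" "min_period F z = min_period F w"
proof -
  have "k < 2 ^ N" "k \<notin> zero_orbit N"
    using assms(1,2) dyadic_index_eq[OF assms(2)] dyadic_cell_less_one_iff[OF assms(2)] unfolding Iper_eq by auto
  moreover have "z \<in> {0..<1}" using dyadic_cell_subset_unit[OF \<open>k < 2 ^ N\<close>] assms(3) by blast
  ultimately show "z \<in> Iper F" unfolding Iper_eq using dyadic_index_eq[OF assms(3)] by simp
  show "min_period F z = min_period F w"
    unfolding min_period_def funpow_Frot_fixed_iff[OF \<open>k < 2 ^ N\<close> \<open>k \<notin> zero_orbit N\<close> assms(2)]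
      funpow_Frot_fixed_iff[OF \<open>k < 2 ^ N\<close> \<open>k \<notin> zero_orbit N\<close> assms(3)] ..
qed

lemma zero_in_Inp: "0 \<in> Inp F"
proof -
  have "0 \<in> zero_orbit N" unfolding zero_orbit_def by (rule range_eqI[of _ _ 0]) simp
  then show ?thesis unfolding Inp_eq dyadic_index_def by simp
qed

lemma Iper_invariant: "F ` Iper F \<subseteq> Iper F" and bij_betw_Iper: "bij_betw F (Iper F) (Iper F)"
proof -
  show "bij_betw F (Iper F) (Iper F)"
    unfolding Iper_def unitI_def by (rule bij_betw_periodic_points[OF inj_on_Frot Frot_image_subset])
  then show "F ` Iper F \<subseteq> Iper F" by (simp add: bij_betw_def)
qed

lemma Inp_invariant: "F ` Inp F \<subseteq> Inp F"
  unfolding Inp_def Iper_def unitI_def by (rule image_nonperiodic_points[OF inj_on_Frot Frot_image_subset])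

lemma Inp_unique_preimage:
  assumes "y \<in> Inp F - {0}"
  shows "\<exists>!x. x \<in> Inp F \<and> F x = y"
proof -
  have "y \<in> {0<..<1}" using assms unfolding Inp_def unitI_def by auto
  then obtain x where x: "x \<in> {0..<1}" "F x = y" unfolding Frot_image[symmetric] by blast
  have "x \<notin> Iper F" using Iper_invariant x(2) assms unfolding Inp_def by blast
  then have "x \<in> Inp F" using x(1) unfolding Inp_def unitI_def by simp
  moreover have "x' = x" if "x' \<in> Inp F" "F x' = y" for x'
    using inj_onD[OF inj_on_Frot] that x unfolding Inp_def unitI_def by auto
  ultimately show ?thesis using x(2) by blast
qed

lemma Frot_orbit_approaches:
  assumes "x \<in> Inp F" "y \<in> Inp F" "e > 0"
  obtains t where "dist ((F ^^ t) x) y < e"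
proof -
  obtain m0 where "(1 / 2::real) ^ m0 < e" using real_arch_pow_inv[of e "1 / 2"] assms(3) by auto
  define m where "m = m0 + N"
  have "N \<le> m" unfolding m_def by simp
  have "(2::real) ^ m0 \<le> 2 ^ m" unfolding m_def by (rule power_increasing) simp_all
  then have "(1::real) / 2 ^ m \<le> 1 / 2 ^ m0" by (intro divide_left_mono) simp_all
  then have "1 / 2 ^ m < e" using \<open>(1 / 2) ^ m0 < e\<close> by (simp add: power_divide)
  let ?\<sigma> = "cell_map m"
  have x: "x \<in> {0..<1}" "dyadic_index N x \<in> zero_orbit N"
    and y: "y \<in> {0..<1}" "dyadic_index N y \<in> zero_orbit N"
    using assms(1,2) unfolding Inp_eq by auto
  obtain i where i: "dyadic_index m x = (?\<sigma> ^^ i) 0"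
    using dyadic_index_zero_orbit[OF \<open>N \<le> m\<close> x] unfolding zero_orbit_def by auto
  obtain j where j: "dyadic_index m y = (?\<sigma> ^^ j) 0"
    using dyadic_index_zero_orbit[OF \<open>N \<le> m\<close> y] unfolding zero_orbit_def by auto
  obtain M where M: "M > 0" "(?\<sigma> ^^ M) 0 = 0" using cell_map_returns[OF \<open>N \<le> m\<close>, of 0] by auto
  define t where "t = M * i + j - i"
  have "(F ^^ t) x \<in> dyadic_cell m ((?\<sigma> ^^ t) (dyadic_index m x))"
    using x(1) by (intro funpow_Frot_dyadic_cell[OF \<open>N \<le> m\<close>] dyadic_index_less mem_dyadic_cell_index) auto
  also have "(?\<sigma> ^^ t) (dyadic_index m x) = dyadic_index m y"
    unfolding i j t_def by (rule funpow_cycle_reaches[OF M])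
  finally have "dist ((F ^^ t) x) y < 1 / 2 ^ m"
    using dist_dyadic_cell mem_dyadic_cell_index y(1) by simp
  then show thesis using \<open>1 / 2 ^ m < e\<close> by (intro that[of t]) linarith
qed

lemma minimal_on_Inp: "minimal_on (Inp F) F"
  unfolding minimal_on_def
proof (intro conjI ballI)
  show "F ` Inp F \<subseteq> Inp F" by (rule Inp_invariant)
  fix x assume "x \<in> Inp F"
  show "Inp F \<subseteq> closure (range (\<lambda>n. (F ^^ n) x))"
  proof
    fix y assume "y \<in> Inp F"
    show "y \<in> closure (range (\<lambda>n. (F ^^ n) x))"
      unfolding closure_approachable
    proof (intro allI impI)
      fix e :: real assume "e > 0"
      then obtain t where "dist ((F ^^ t) x) y < e"
        using Frot_orbit_approaches \<open>x \<in> Inp F\<close> \<open>y \<in> Inp F\<close> by blast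
      then show "\<exists>z\<in>range (\<lambda>n. (F ^^ n) x). dist z y < e" by blast
    qed
  qed
qed

section \<open>Maximal periodic intervals\<close>

lemma periodic_interval_dyadic_cell:
  assumes "z \<in> Iper F" "z \<in> dyadic_cell N k"
  shows "periodic_interval F (real k / 2 ^ N) (real (k + 1) / 2 ^ N)"
proof (rule periodic_intervalI)
  show "real k / 2 ^ N < real (k + 1) / 2 ^ N" by (simp add: divide_strict_right_mono)
  fix u assume "u \<in> {real k / 2 ^ N..<real (k + 1) / 2 ^ N}"
  then have "u \<in> dyadic_cell N k" unfolding dyadic_cell_def by (simp add: add.commute)
  then show "u \<in> Iper F \<and> min_period F u = min_period F z" using Iper_dyadic_cell[OF assms] by blast
qed

lemma periodic_interval_dyadic_hull:
  assumes "periodic_interval F x y"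
  obtains a b where "a < b" "b \<le> 2 ^ N" "{x..<y} \<subseteq> {real a / 2 ^ N..<real b / 2 ^ N}"
    "periodic_interval F (real a / 2 ^ N) (real b / 2 ^ N)"
proof -
  note xy = periodic_intervalD[OF assms]
  have x: "0 \<le> x" "y \<le> 1" using periodic_interval_bounds[OF assms] unfolding unitI_def by auto
  define a where "a = dyadic_index N x"
  define b where "b = nat \<lceil>2 ^ N * y\<rceil>"
  have x_cell: "x \<in> dyadic_cell N a" unfolding a_def using x(1) by (rule mem_dyadic_cell_index)
  have b: "real b = of_int \<lceil>2 ^ N * y\<rceil>" unfolding b_def using x(1) xy(1) by simp
  have "b \<le> 2 ^ N" using x(2) unfolding b_def by (simp add: ceiling_le_iff nat_le_iff)
  have "y \<le> real b / 2 ^ N" using le_of_int_ceiling[of "2 ^ N * y"] unfolding b by (simp add: field_simps)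
  moreover have "real a / 2 ^ N \<le> x" using x_cell unfolding dyadic_cell_def by simp
  ultimately have hull: "{x..<y} \<subseteq> {real a / 2 ^ N..<real b / 2 ^ N}"
    and "real a / 2 ^ N < real b / 2 ^ N" using xy(1) by auto
  then have "a < b" by (simp add: divide_less_cancel)
  have "z \<in> Iper F \<and> min_period F z = min_period F x" if z: "z \<in> {real a / 2 ^ N..<real b / 2 ^ N}" for z
  proof -
    have "0 \<le> real a / 2 ^ N" "real a / 2 ^ N \<le> z" using z by simp_all
    then have "0 \<le> z" by linarith
    define c where "c = dyadic_index N z"
    have z_cell: "z \<in> dyadic_cell N c" unfolding c_def using \<open>0 \<le> z\<close> by (rule mem_dyadic_cell_index)
    have "a \<le> c" using z dyadic_grid_le_iff[OF z_cell, of "int a"] by simp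
    have "c < b" using z dyadic_grid_less_iff[OF z_cell, of "int b"] by simp
    then have "int c < \<lceil>2 ^ N * y\<rceil>" unfolding b_def by linarith
    then have "real c / 2 ^ N < y" by (simp add: less_ceiling_iff field_simps)
    then obtain w where w: "w \<in> {x..<y}" "w \<in> dyadic_cell N c"
      using dyadic_cell_meets_interval[OF x_cell \<open>a \<le> c\<close> _ xy(1)] by blast
    have "w \<in> Iper F" using w(1) xy(2) by blast
    then show ?thesis using Iper_dyadic_cell[OF _ w(2) z_cell] xy(3)[OF w(1)] by simp
  qed
  then have "periodic_interval F (real a / 2 ^ N) (real b / 2 ^ N)"
    using \<open>real a / 2 ^ N < real b / 2 ^ N\<close> by (intro periodic_intervalI) blast+
  then show thesis using that \<open>a < b\<close> \<open>b \<le> 2 ^ N\<close> hull by blast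
qed

lemma max_periodic_interval_dyadic:
  assumes "max_periodic_interval F x y"
  obtains i j where "i < j" "j \<le> 2 ^ N" "x = real i / 2 ^ N" "y = real j / 2 ^ N"
proof -
  have p: "periodic_interval F x y" using assms by (rule max_periodic_interval_periodic)
  obtain a b where ab: "a < b" "b \<le> 2 ^ N" "{x..<y} \<subseteq> {real a / 2 ^ N..<real b / 2 ^ N}"
    "periodic_interval F (real a / 2 ^ N) (real b / 2 ^ N)"
    using p by (rule periodic_interval_dyadic_hull)
  then have "{real a / 2 ^ N..<real b / 2 ^ N} = {x..<y}" using assms unfolding max_periodic_interval_def by blast
  moreover have "x < y" using p unfolding periodic_interval_def by simp
  moreover have "real a / 2 ^ N < real b / 2 ^ N" using ab(1) by (simp add: divide_strict_right_mono)
  ultimately have "real a / 2 ^ N = x" "real b / 2 ^ N = y" using atLeastLessThan_inj by blast+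
  then show thesis using that ab(1,2) by blast
qed

lemma max_periodic_interval_dyadicI:
  assumes "periodic_interval F (real i / 2 ^ N) (real j / 2 ^ N)"
    and "\<And>a b. a \<le> i \<Longrightarrow> j \<le> b \<Longrightarrow> b \<le> 2 ^ N \<Longrightarrow>
      periodic_interval F (real a / 2 ^ N) (real b / 2 ^ N) \<Longrightarrow> a = i \<and> b = j"
  shows "max_periodic_interval F (real i / 2 ^ N) (real j / 2 ^ N)"
  unfolding max_periodic_interval_def
proof (intro conjI allI impI)
  fix x' y' assume h: "periodic_interval F x' y' \<and> {real i / 2 ^ N..<real j / 2 ^ N} \<subseteq> {x'..<y'}"
  obtain a b where ab: "a < b" "b \<le> 2 ^ N" "{x'..<y'} \<subseteq> {real a / 2 ^ N..<real b / 2 ^ N}"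
    "periodic_interval F (real a / 2 ^ N) (real b / 2 ^ N)"
    using conjunct1[OF h] by (rule periodic_interval_dyadic_hull)
  have "real i / 2 ^ N < real j / 2 ^ N" by (rule periodic_intervalD(1)[OF assms(1)])
  moreover have "{real i / 2 ^ N..<real j / 2 ^ N} \<subseteq> {real a / 2 ^ N..<real b / 2 ^ N}" using h ab(3) by blast
  ultimately have "real a / 2 ^ N \<le> real i / 2 ^ N" "real j / 2 ^ N \<le> real b / 2 ^ N"
    using atLeastLessThan_subset_iff by (metis not_le)+
  then have "a \<le> i" "j \<le> b" by (simp_all add: divide_le_cancel)
  then have "a = i" "b = j" using assms(2) ab(2,4) by blast+
  then show "{x'..<y'} = {real i / 2 ^ N..<real j / 2 ^ N}" using h ab(3) by auto
qed (rule assms(1))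

lemma max_periodic_interval_exists:
  assumes "z \<in> Iper F"
  obtains x y where "max_periodic_interval F x y" "z \<in> {x..<y}"
proof -
  define k where "k = dyadic_index N z"
  have z: "z \<in> dyadic_cell N k" "k < 2 ^ N"
    unfolding k_def using assms mem_dyadic_cell_index dyadic_index_less unfolding Iper_eq by auto
  define G where "G = {(i, j). i \<le> k \<and> k < j \<and> j \<le> 2 ^ N \<and> periodic_interval F (real i / 2 ^ N) (real j / 2 ^ N)}"
  have "(k, k + 1) \<in> G" unfolding G_def using z(2) periodic_interval_dyadic_cell[OF assms z(1)] by auto
  moreover have "\<forall>p. p \<in> G \<longrightarrow> snd p - fst p < 2 ^ N + 1" unfolding G_def by auto
  ultimately obtain p where p: "p \<in> G" "\<forall>p'. p' \<in> G \<longrightarrow> snd p' - fst p' \<le> snd p - fst p"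
    using ex_has_greatest_nat[of "\<lambda>p. p \<in> G" "(k, k + 1)" "\<lambda>p. snd p - fst p" "2 ^ N + 1"] by blast
  obtain i j where "p = (i, j)" by (cases p)
  then have ij: "i \<le> k" "k < j" "j \<le> 2 ^ N" "periodic_interval F (real i / 2 ^ N) (real j / 2 ^ N)"
    and longest: "\<And>a b. (a, b) \<in> G \<Longrightarrow> b - a \<le> j - i"
    using p unfolding G_def by auto
  have max: "max_periodic_interval F (real i / 2 ^ N) (real j / 2 ^ N)"
  proof (rule max_periodic_interval_dyadicI[OF ij(4)])
    fix a b assume ab: "a \<le> i" "j \<le> b" "b \<le> 2 ^ N" "periodic_interval F (real a / 2 ^ N) (real b / 2 ^ N)"
    then have "(a, b) \<in> G" unfolding G_def using ij(1,2) by auto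
    then show "a = i \<and> b = j" using longest[of a b] ab(1,2) ij(1,2) by arith
  qed
  have "real i / 2 ^ N \<le> real k / 2 ^ N" "(real k + 1) / 2 ^ N \<le> real j / 2 ^ N"
    using ij(1,2) by (simp_all add: divide_right_mono)
  then have "z \<in> {real i / 2 ^ N..<real j / 2 ^ N}" using z(1) unfolding dyadic_cell_def by auto
  with max show thesis by (rule that)
qed

lemma Iper_max_periodic_intervals:
  obtains P where "finite P" "\<forall>(x, y)\<in>P. max_periodic_interval F x y \<and> x \<in> unitI \<and> y \<le> 1"
    "Iper F = (\<Union>(x, y)\<in>P. {x..<y})"
proof
  let ?P = "{(x, y). max_periodic_interval F x y}"
  have "?P \<subseteq> (\<lambda>(i, j). (real i / 2 ^ N, real j / 2 ^ N)) ` ({..(2::nat) ^ N} \<times> {..(2::nat) ^ N})"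
  proof
    fix p assume "p \<in> ?P"
    then obtain x y where p: "p = (x, y)" "max_periodic_interval F x y" by auto
    obtain i j where "i < j" "j \<le> 2 ^ N" "x = real i / 2 ^ N" "y = real j / 2 ^ N"
      using p(2) by (rule max_periodic_interval_dyadic)
    then show "p \<in> (\<lambda>(i, j). (real i / 2 ^ N, real j / 2 ^ N)) ` ({..2 ^ N} \<times> {..2 ^ N})"
      unfolding p by (intro image_eqI[of _ _ "(i, j)"]) auto
  qed
  then show "finite ?P" by (rule finite_subset) simp
  show "\<forall>(x, y)\<in>?P. max_periodic_interval F x y \<and> x \<in> unitI \<and> y \<le> 1"
    using periodic_interval_bounds[OF max_periodic_interval_periodic] by blast
  show "Iper F = (\<Union>(x, y)\<in>?P. {x..<y})"
  proof
    show "Iper F \<subseteq> (\<Union>(x, y)\<in>?P. {x..<y})"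
    proof
      fix z assume "z \<in> Iper F"
      then obtain x y where "max_periodic_interval F x y" "z \<in> {x..<y}"
        by (rule max_periodic_interval_exists)
      then show "z \<in> (\<Union>(x, y)\<in>?P. {x..<y})" by blast
    qed
    show "(\<Union>(x, y)\<in>?P. {x..<y}) \<subseteq> Iper F"
      using periodic_intervalD(2)[OF max_periodic_interval_periodic] by blast
  qed
qed

lemma finite_periods: "finite {p. \<exists>x\<in>Iper F. min_period F x = p}"
proof (rule finite_subset)
  show "{p. \<exists>x\<in>Iper F. min_period F x = p} \<subseteq> (\<lambda>k. min_period F (real k / 2 ^ N)) ` {..<2 ^ N}"
  proof
    fix p assume "p \<in> {p. \<exists>x\<in>Iper F. min_period F x = p}"
    then obtain x where x: "x \<in> Iper F" "min_period F x = p" by auto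
    define k where "k = dyadic_index N x"
    have "x \<in> dyadic_cell N k" "k < 2 ^ N"
      unfolding k_def using x(1) mem_dyadic_cell_index dyadic_index_less unfolding Iper_eq by auto
    then show "p \<in> (\<lambda>k. min_period F (real k / 2 ^ N)) ` {..<2 ^ N}"
      using Iper_dyadic_cell(2)[OF x(1) \<open>x \<in> dyadic_cell N k\<close> left_mem_dyadic_cell] x(2) by auto
  qed
qed simp

end

theorem theorem1p6:
  fixes N q :: nat and \<pi> :: "nat \<Rightarrow> nat"
  assumes "N \<ge> 1" and "q = 2 ^ N" and "\<pi> permutes {..<q}"
  defines "F \<equiv> Frot q \<pi>"
  shows "((\<forall>x\<in>Iper F. periodic_pt F x) \<and> F ` Iper F \<subseteq> Iper F \<and> bij_betw F (Iper F) (Iper F)) \<and>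
         (Iper F \<noteq> {} \<longrightarrow>
           (\<exists>P. finite P \<and> (\<forall>(x,y)\<in>P. max_periodic_interval F x y \<and> x \<in> unitI \<and> y \<le> 1) \<and>
                Iper F = (\<Union>(x,y)\<in>P. {x..<y}))) \<and>
         finite {p. \<exists>x\<in>Iper F. min_period F x = p} \<and>
         (0 \<in> Inp F \<and> F ` Inp F \<subseteq> Inp F \<and> (\<forall>y\<in>Inp F - {0}. \<exists>!x. x \<in> Inp F \<and> F x = y)) \<and>
         minimal_on (Inp F) F"
proof -
  interpret odo: rotated_odometer N \<pi>
    using assms(3) unfolding assms(2) by unfold_locales
  have F: "F = odo.F" unfolding F_def assms(2) ..
  show ?thesis
    unfolding F
  proof (intro conjI impI)
    show "\<forall>x\<in>Iper odo.F. periodic_pt odo.F x" unfolding Iper_def by simp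
    show "odo.F ` Iper odo.F \<subseteq> Iper odo.F" by (rule odo.Iper_invariant)
    show "bij_betw odo.F (Iper odo.F) (Iper odo.F)" by (rule odo.bij_betw_Iper)
    show "\<exists>P. finite P \<and> (\<forall>(x, y)\<in>P. max_periodic_interval odo.F x y \<and> x \<in> unitI \<and> y \<le> 1) \<and>
        Iper odo.F = (\<Union>(x, y)\<in>P. {x..<y})"
      by (rule odo.Iper_max_periodic_intervals) blast
    show "finite {p. \<exists>x\<in>Iper odo.F. min_period odo.F x = p}" by (rule odo.finite_periods)
    show "0 \<in> Inp odo.F" by (rule odo.zero_in_Inp)
    show "odo.F ` Inp odo.F \<subseteq> Inp odo.F" by (rule odo.Inp_invariant)
    show "\<forall>y\<in>Inp odo.F - {0}. \<exists>!x. x \<in> Inp odo.F \<and> odo.F x = y" using odo.Inp_unique_preimage by blast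
    show "minimal_on (Inp odo.F) odo.F" by (rule odo.minimal_on_Inp)
  qed
qed

end
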